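(* For $(\lambda,z)\in(0,1]\times(0,1]$, the $2N\times2N$ matrix $$K(\lambda,z)=\begin{pmatrix}0&B(1;\lambda,z)\\ B(-1;\lambda,z)&0\end{pmatrix}$$ has non-negative entries and is irreducible. For $(\lambda,z)\in(0,1)\times(0,1]$, the spectral radius of $K(\lambda,z)$ is strictly less than $1$.
   Context: Fix an integer $N\ge 3$. Let $\mathcal G_N$ be the groupoid with object set $\{1,\dots,N\}$ generated by arrows $A_{i,j}^{(k)}$, $i\neq j\in\{1,\dots,N\}$, $k\in\{-1,1\}$, with source $i$ and target $j$, subject to the relations $A_{i,j}^{(k)}A_{j,\ell}^{(k)}=A_{i,\ell}^{(k)}$ for all $i,j,\ell$, $k$, with the convention $A_{i,i}^{(k)}:=e_i$ (unit at object $i$). Let $\mathcal A$ be its arrow set. Every arrow has a unique reduced representation: either empty or $\prod_{\ell=1}^dA_{i_\ell,j_\ell}^{(k_\ell)}$ with alternating upper indices and $i_\ell\ne j_\ell$. A metric $|\cdot|_{\mathcal K}$ is given by values $|A_{i,j}^{(k)}|_{\mathcal K}\ge0$ on generators, $|e_i|_{\mathcal K}=0$, and $|w|_{\mathcal K}=\sum_\ell|A_{i_\ell,j_\ell}^{(k_\ell)}|_{\mathcal K}$ over the reduced representation of $w$. Let $\{W_n\}_{n\ge0}$ be the Markov chain on $\mathcal A$ with $P(W_{n+1}=y\mid W_n=x)=p_{i,j}^{(k)}$ if $x^{-1}y=A_{i,j}^{(k)}$ with $i\ne j$ and $0$ otherwise, where $p_{i,j}^{(k)}\in(0,1)$ and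 $\sum_{j\ne i}\sum_{k=\pm1}p_{i,j}^{(k)}=1$ for each $i$; $E_x$ denotes expectation with $W_0=x$. For $x\in\mathcal A$ let $T(0,x)=\inf\{n\ge0:W_n=W_0x\}$ (possibly $\infty$), and $R_{i,j}^{(k)}(\lambda)=E_{e_i}[\lambda^{T(0,A_{i,j}^{(k)})}]$ for $\lambda\in(0,1]$. Let $B(k;\lambda,z)$ be the $N\times N$ matrix with entries $[B(k;\lambda,z)]_{i,j}=(1-\delta_{i,j})z^{|A_{i,j}^{(k)}|_{\mathcal K}}R_{i,j}^{(k)}(\lambda)$. *)

theory Defs
  imports Complex_Main "Jordan_Normal_Form.Spectral_Radius"
begin

(* A generator A_{i,j}^{(k)} is the triple (i,j,k).  An arrow of the groupoid G_N is
   represented by its reduced representation: a pair (s, w) where s is the source object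
   and w is the reduced word (list of generators, consecutive ones composable, alternating
   upper indices, i \<noteq> j). *)
type_synonym gen = "nat \<times> nat \<times> int"
type_synonym arrow = "nat \<times> gen list"

fun gsrc :: "gen \<Rightarrow> nat" where "gsrc (i, j, k) = i"
fun gtgt :: "gen \<Rightarrow> nat" where "gtgt (i, j, k) = j"
fun gidx :: "gen \<Rightarrow> int" where "gidx (i, j, k) = k"

definition unit_arrow :: "nat \<Rightarrow> arrow" where "unit_arrow i = (i, [])"

definition tgt :: "arrow \<Rightarrow> nat" where
  "tgt x = (if snd x = [] then fst x else gtgt (last (snd x)))"

(* right multiplication of an arrow x with target i by the generator A_{i,j}^{(k)},
   using A_{a,i}^{(k)} A_{i,j}^{(k)} = A_{a,j}^{(k)} and A_{a,a}^{(k)} = e_a *)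
definition mult_gen :: "arrow \<Rightarrow> nat \<Rightarrow> int \<Rightarrow> arrow" where
  "mult_gen x j k =
     (let w = snd x; i = tgt x in
      if w = [] then (fst x, [(i, j, k)])
      else if gidx (last w) = k then
        (if gsrc (last w) = j then (fst x, butlast w)
         else (fst x, butlast w @ [(gsrc (last w), j, k)]))
      else (fst x, w @ [(i, j, k)]))"

fun walk :: "arrow \<Rightarrow> (nat \<times> int) list \<Rightarrow> arrow" where
  "walk x [] = x"
| "walk x ((j, k) # ss) = walk (mult_gen x j k) ss"

fun path_prob :: "(nat \<Rightarrow> nat \<Rightarrow> int \<Rightarrow> real) \<Rightarrow> arrow \<Rightarrow> (nat \<times> int) list \<Rightarrow> real" where
  "path_prob p x [] = 1"
| "path_prob p x ((j, k) # ss) = p (tgt x) j k * path_prob p (mult_gen x j k) ss"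

fun admissible :: "nat \<Rightarrow> arrow \<Rightarrow> (nat \<times> int) list \<Rightarrow> bool" where
  "admissible N x [] = True"
| "admissible N x ((j, k) # ss) =
     (j \<in> {1..N} \<and> j \<noteq> tgt x \<and> k \<in> {-1, 1} \<and> admissible N (mult_gen x j k) ss)"

(* P_x(T(0,y) = n): W_0 = x, T(0,y) = first n with W_n = W_0 y *)
definition first_hit_prob ::
  "nat \<Rightarrow> (nat \<Rightarrow> nat \<Rightarrow> int \<Rightarrow> real) \<Rightarrow> arrow \<Rightarrow> arrow \<Rightarrow> nat \<Rightarrow> real" where
  "first_hit_prob N p x target n =
     (\<Sum>ss \<in> {ss. length ss = n \<and> set ss \<subseteq> {1..N} \<times> {-1, 1} \<and> admissible N x ss
                 \<and> walk x ss = target \<and> (\<forall>m<n. walk x (take m ss) \<noteq> target)}.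
        path_prob p x ss)"

(* R_{i,j}^{(k)}(lam) = E_{e_i}[lam^{T(0,A_{i,j}^{(k)})}] = \<Sum>_n lam^n P(T = n)
   (the event T = \<infinity> contributes 0) *)
definition R_fun :: "nat \<Rightarrow> (nat \<Rightarrow> nat \<Rightarrow> int \<Rightarrow> real) \<Rightarrow> nat \<Rightarrow> nat \<Rightarrow> int \<Rightarrow> real \<Rightarrow> real" where
  "R_fun N p i j k lam =
     (\<Sum>n. lam ^ n * first_hit_prob N p (unit_arrow i) (i, [(i, j, k)]) n)"

(* [B(k;lam,z)]_{i,j}, for i,j \<in> {1..N}; Kn i j k = |A_{i,j}^{(k)}|_K *)
definition B_entry ::
  "nat \<Rightarrow> (nat \<Rightarrow> nat \<Rightarrow> int \<Rightarrow> real) \<Rightarrow> (nat \<Rightarrow> nat \<Rightarrow> int \<Rightarrow> real) \<Rightarrow> int \<Rightarrow> real \<Rightarrow> real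
    \<Rightarrow> nat \<Rightarrow> nat \<Rightarrow> real" where
  "B_entry N p Kn k lam z i j = (if i = j then 0 else z powr Kn i j k * R_fun N p i j k lam)"

(* the 2N \<times> 2N block matrix K = [[0, B(1)], [B(-1), 0]], 0-based indices *)
definition K_mat ::
  "nat \<Rightarrow> (nat \<Rightarrow> nat \<Rightarrow> int \<Rightarrow> real) \<Rightarrow> (nat \<Rightarrow> nat \<Rightarrow> int \<Rightarrow> real) \<Rightarrow> real \<Rightarrow> real \<Rightarrow> real mat" where
  "K_mat N p Kn lam z = mat (2*N) (2*N) (%(a, b).
      if a < N \<and> N \<le> b then B_entry N p Kn 1 lam z (a+1) (b-N+1)
      else if N \<le> a \<and> b < N then B_entry N p Kn (-1) lam z (a-N+1) (b+1)
      else 0)"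

definition nonneg_mat :: "real mat \<Rightarrow> bool" where
  "nonneg_mat A = (\<forall>a < dim_row A. \<forall>b < dim_col A. A $$ (a, b) \<ge> 0)"

definition irreducible_mat :: "real mat \<Rightarrow> bool" where
  "irreducible_mat A = (\<forall>a < dim_row A. \<forall>b < dim_row A. \<exists>m. (A ^\<^sub>m m) $$ (a, b) > 0)"

end

theory Submission
  imports Defs
begin

text \<open>
  Every entry of \<open>K(\<lambda>, z)\<close> is a power of \<open>z\<close> times a first-passage generating function
  \<open>R\<close>, hence nonnegative, and the one-step path gives \<open>R \<ge> \<lambda> p > 0\<close>.  So all entries of
  the two blocks off their diagonals are positive, and for \<open>N \<ge> 3\<close> a third object to route
  through always exists: any two indices are joined by a positive path of length at most 3.

  For the spectral radius, since \<open>z \<le> 1\<close> the \<open>n\<close>-th iterated row sum \<open>(K\<^sup>n 1)\<^sub>a\<close> is at most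
  the sum, over reduced words of length \<open>n\<close> with alternating upper indices, of the products
  of the \<open>R\<close>'s of their letters.  By left translation invariance of the walk, such a product
  is the \<open>\<lambda>\<close>-weighted probability of the paths that build up the word letter by letter,
  each letter by a first passage.  These paths end at reduced words of length \<open>n\<close>, so they
  are distinct for different \<open>n\<close>, and the sum over all \<open>n\<close> is at most
  \<open>\<Sum>\<^sub>m \<lambda>\<^sup>m = 1 / (1 - \<lambda>)\<close>.  A nonnegative matrix whose iterated row sums are summable
  has all its eigenvalues in the open unit disc.
\<close>

section \<open>Nonnegative matrices\<close>

fun pow_row_sum :: "real mat \<Rightarrow> nat \<Rightarrow> nat \<Rightarrow> real" where
  "pow_row_sum K 0 a = 1"
| "pow_row_sum K (Suc k) a = (\<Sum>c<dim_row K. K $$ (a, c) * pow_row_sum K k c)"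

lemma pow_row_sum_nonneg:
  fixes K :: "real mat"
  assumes "K \<in> carrier_mat n n" "\<And>a b. a < n \<Longrightarrow> b < n \<Longrightarrow> 0 \<le> K $$ (a, b)" "a < n"
  shows "0 \<le> pow_row_sum K k a"
  using assms(3)
  by (induction k arbitrary: a) (use assms(1,2) in \<open>auto intro!: sum_nonneg mult_nonneg_nonneg\<close>)

lemma power_mat_Suc_index:
  fixes K :: "real mat"
  assumes "K \<in> carrier_mat n n" "a < n" "b < n"
  shows "(K ^\<^sub>m Suc m) $$ (a, b) = (\<Sum>c<n. (K ^\<^sub>m m) $$ (a, c) * K $$ (c, b))"
  using assms by (simp add: index_mult_mat scalar_prod_def lessThan_atLeast0)

lemma power_mat_index_nonneg:
  fixes K :: "real mat"
  assumes K: "K \<in> carrier_mat n n"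
    and nonneg: "\<And>a b. a < n \<Longrightarrow> b < n \<Longrightarrow> 0 \<le> K $$ (a, b)"
    and a: "a < n" and "b < n"
  shows "0 \<le> (K ^\<^sub>m m) $$ (a, b)"
  using \<open>b < n\<close>
proof (induction m arbitrary: b)
  case 0
  then show ?case using K a by simp
next
  case (Suc m)
  then show ?case
    unfolding power_mat_Suc_index[OF K a Suc.prems]
    using nonneg a by (auto intro!: sum_nonneg mult_nonneg_nonneg)
qed

lemma power_mat_index_pos_Suc:
  fixes K :: "real mat"
  assumes K: "K \<in> carrier_mat n n"
    and nonneg: "\<And>a b. a < n \<Longrightarrow> b < n \<Longrightarrow> 0 \<le> K $$ (a, b)"
    and abc: "a < n" "b < n" "c < n"
    and pos: "0 < (K ^\<^sub>m m) $$ (a, c)" "0 < K $$ (c, b)"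
  shows "0 < (K ^\<^sub>m Suc m) $$ (a, b)"
proof -
  have "0 < (K ^\<^sub>m m) $$ (a, c) * K $$ (c, b)" using pos by simp
  also have "\<dots> \<le> (\<Sum>d<n. (K ^\<^sub>m m) $$ (a, d) * K $$ (d, b))"
    by (rule member_le_sum)
      (use abc nonneg power_mat_index_nonneg[OF K nonneg] in \<open>auto intro: mult_nonneg_nonneg\<close>)
  also have "\<dots> = (K ^\<^sub>m Suc m) $$ (a, b)"
    using power_mat_Suc_index[OF K abc(1,2)] by simp
  finally show ?thesis .
qed

lemma irreducible_mat_if_connected:
  fixes K :: "real mat"
  assumes K: "K \<in> carrier_mat n n"
    and nonneg: "\<And>a b. a < n \<Longrightarrow> b < n \<Longrightarrow> 0 \<le> K $$ (a, b)"
    and connected: "\<And>a b. a < n \<Longrightarrow> b < n \<Longrightarrow>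
                      (\<lambda>a c. a < n \<and> c < n \<and> 0 < K $$ (a, c))\<^sup>*\<^sup>* a b"
  shows "irreducible_mat K"
  unfolding irreducible_mat_def
proof (intro allI impI)
  fix a b assume a: "a < dim_row K" and b: "b < dim_row K"
  have "a < n" using a K by simp
  from connected[OF this] b K have "(\<lambda>a c. a < n \<and> c < n \<and> 0 < K $$ (a, c))\<^sup>*\<^sup>* a b" by simp
  then show "\<exists>m. 0 < (K ^\<^sub>m m) $$ (a, b)"
  proof (induction rule: rtranclp_induct)
    case base
    show ?case using \<open>a < n\<close> K by (intro exI[of _ 0]) simp
  next
    case (step c b)
    then obtain m where "0 < (K ^\<^sub>m m) $$ (a, c)" by blast
    then have "0 < (K ^\<^sub>m Suc m) $$ (a, b)"
      using power_mat_index_pos_Suc[OF K nonneg \<open>a < n\<close>] step.hyps(2) by blast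
    then show ?case by blast
  qed
qed

lemma eigenvector_pow_row_sum_bound:
  fixes K :: "real mat" and v :: "complex vec"
  assumes K: "K \<in> carrier_mat n n"
    and nonneg: "\<And>a b. a < n \<Longrightarrow> b < n \<Longrightarrow> 0 \<le> K $$ (a, b)"
    and v: "v \<in> carrier_vec n" "map_mat complex_of_real K *\<^sub>v v = mu \<cdot>\<^sub>v v"
    and bound: "\<And>c. c < n \<Longrightarrow> cmod (v $ c) \<le> B"
    and "a < n"
  shows "cmod mu ^ k * cmod (v $ a) \<le> B * pow_row_sum K k a"
  using \<open>a < n\<close>
proof (induction k arbitrary: a)
  case 0
  then show ?case using bound by simp
next
  case (Suc k)
  have "mu * v $ a = (map_mat complex_of_real K *\<^sub>v v) $ a"
    using v Suc.prems by simp
  also have "\<dots> = (\<Sum>c<n. complex_of_real (K $$ (a, c)) * v $ c)"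
    using K v(1) Suc.prems by (simp add: scalar_prod_def lessThan_atLeast0)
  finally have eigen: "mu * v $ a = (\<Sum>c<n. complex_of_real (K $$ (a, c)) * v $ c)" .
  have "cmod mu ^ Suc k * cmod (v $ a) = cmod mu ^ k * cmod (mu * v $ a)"
    by (simp add: norm_mult)
  also have "\<dots> \<le> cmod mu ^ k * (\<Sum>c<n. K $$ (a, c) * cmod (v $ c))"
    unfolding eigen
    using norm_sum[of "\<lambda>c. complex_of_real (K $$ (a, c)) * v $ c" "{..<n}"] nonneg Suc.prems
    by (intro mult_left_mono) (auto simp: norm_mult)
  also have "\<dots> = (\<Sum>c<n. K $$ (a, c) * (cmod mu ^ k * cmod (v $ c)))"
    by (simp add: sum_distrib_left algebra_simps)
  also have "\<dots> \<le> (\<Sum>c<n. K $$ (a, c) * (B * pow_row_sum K k c))"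
    using Suc.IH nonneg Suc.prems by (intro sum_mono mult_left_mono) auto
  also have "\<dots> = B * pow_row_sum K (Suc k) a"
    using K by (simp add: sum_distrib_left algebra_simps)
  finally show ?case .
qed

lemma spectral_radius_lt_1_if_pow_row_sums_bounded:
  fixes K :: "real mat"
  assumes K: "K \<in> carrier_mat n n" and "0 < n"
    and nonneg: "\<And>a b. a < n \<Longrightarrow> b < n \<Longrightarrow> 0 \<le> K $$ (a, b)"
    and bounded: "\<And>a M. a < n \<Longrightarrow> (\<Sum>k<M. pow_row_sum K k a) \<le> C"
  shows "spectral_radius (map_mat complex_of_real K) < 1"
proof (rule ccontr)
  let ?C = "map_mat complex_of_real K"
  assume "\<not> spectral_radius ?C < 1"
  moreover obtain mu where mu: "mu \<in> spectrum ?C" "spectral_radius ?C = cmod mu"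
    using spectral_radius_mem_max(1)[of ?C n] K \<open>0 < n\<close> by auto
  ultimately have mu_ge_1: "1 \<le> cmod mu" by simp
  obtain v where v: "v \<in> carrier_vec n" "v \<noteq> 0\<^sub>v n" "?C *\<^sub>v v = mu \<cdot>\<^sub>v v"
    using mu(1) K by (auto simp: spectrum_def eigenvalue_def eigenvector_def)
  obtain a where a: "a < n" "v $ a \<noteq> 0"
    using v(1,2) by (metis carrier_vecD eq_vecI index_zero_vec)
  define B where "B = Max ((\<lambda>c. cmod (v $ c)) ` {..<n})"
  have vB: "cmod (v $ c) \<le> B" if "c < n" for c
    unfolding B_def using that by (intro Max_ge) auto
  have "B \<ge> 0" using vB[OF a(1)] norm_ge_zero order_trans by blast
  have bound: "real M * cmod (v $ a) \<le> B * C" for M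
  proof -
    have "real M * cmod (v $ a) \<le> (\<Sum>k<M. cmod mu ^ k * cmod (v $ a))"
      using mu_ge_1 sum_mono[of "{..<M}" "\<lambda>_. cmod (v $ a)" "\<lambda>k. cmod mu ^ k * cmod (v $ a)"]
      by (simp add: one_le_power mult_le_cancel_right1)
    also have "\<dots> \<le> B * (\<Sum>k<M. pow_row_sum K k a)"
      unfolding sum_distrib_left
      by (intro sum_mono eigenvector_pow_row_sum_bound[OF K nonneg v(1,3) vB a(1)])
    also have "\<dots> \<le> B * C"
      using bounded[OF a(1)] \<open>B \<ge> 0\<close> by (rule mult_left_mono)
    finally show ?thesis .
  qed
  obtain M :: nat where "B * C / cmod (v $ a) < M"
    using reals_Archimedean2 by blast
  then show False
    using bound[of M] a(2) by (simp add: divide_less_eq)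
qed

section \<open>Reduced words and walks in the groupoid\<close>

fun reduced_word :: "nat \<Rightarrow> gen list \<Rightarrow> bool" where
  "reduced_word s [] = True"
| "reduced_word s (g # gs) =
     (gsrc g = s \<and> gtgt g \<noteq> s \<and> (gs \<noteq> [] \<longrightarrow> gidx (hd gs) \<noteq> gidx g) \<and> reduced_word (gtgt g) gs)"

definition reduced_arrow :: "arrow \<Rightarrow> bool" where
  "reduced_arrow x = reduced_word (fst x) (snd x)"

lemma tgt_snoc: "tgt (s, w @ [g]) = gtgt g"
  by (simp add: tgt_def)

lemma reduced_word_snoc:
  "reduced_word s (w @ [g]) \<longleftrightarrow>
     reduced_word s w \<and> gsrc g = tgt (s, w) \<and> gtgt g \<noteq> gsrc g \<and> (w \<noteq> [] \<longrightarrow> gidx (last w) \<noteq> gidx g)"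
proof (induction w arbitrary: s)
  case Nil
  then show ?case by (auto simp: tgt_def)
next
  case (Cons a w)
  show ?case
  proof (cases w)
    case Nil
    then show ?thesis by (auto simp: tgt_def)
  next
    case (Cons b w')
    then have "tgt (s, a # w) = tgt (gtgt a, w)" by (simp add: tgt_def)
    then show ?thesis using Cons.IH[of "gtgt a"] Cons by auto
  qed
qed

lemma reduced_word_appendD: "reduced_word s (u @ v) \<Longrightarrow> reduced_word s u"
  by (induction u arbitrary: s) (auto simp: hd_append)

lemma reduced_arrow_unit: "reduced_arrow (unit_arrow i)" and tgt_unit_arrow: "tgt (unit_arrow i) = i"
  by (auto simp: unit_arrow_def reduced_arrow_def tgt_def)

lemma fst_mult_gen: "fst (mult_gen x j k) = fst x"
  by (simp add: mult_gen_def Let_def)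

lemma reduced_mult_gen:
  assumes "reduced_arrow x" "j \<noteq> tgt x"
  shows "reduced_arrow (mult_gen x j k) \<and> tgt (mult_gen x j k) = j"
proof (cases x)
  case (Pair s w)
  show ?thesis
  proof (cases w rule: rev_cases)
    case Nil
    then show ?thesis using assms Pair by (auto simp: mult_gen_def reduced_arrow_def tgt_def)
  next
    case (snoc w' g)
    obtain a b c where g: "g = (a, b, c)" by (cases g)
    have w': "reduced_word s w'" "a = tgt (s, w')" "w' \<noteq> [] \<longrightarrow> gidx (last w') \<noteq> c"
      using assms(1) Pair snoc g by (auto simp: reduced_arrow_def reduced_word_snoc)
    have "tgt x = b" using Pair snoc g by (simp add: tgt_def)
    show ?thesis
    proof (cases "c = k")
      case True
      show ?thesis
      proof (cases "a = j")
        case True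
        then show ?thesis using \<open>c = k\<close> Pair snoc g w'
          by (simp add: mult_gen_def Let_def reduced_arrow_def)
      next
        case False
        have "reduced_word s (w' @ [(a, j, k)])"
          using w' False True by (simp add: reduced_word_snoc)
        then show ?thesis using \<open>c = k\<close> False Pair snoc g
          by (simp add: mult_gen_def Let_def reduced_arrow_def tgt_def)
      qed
    next
      case False
      have "reduced_word s (w' @ [g])" using assms(1) Pair snoc by (simp add: reduced_arrow_def)
      then have "reduced_word s (w @ [(b, j, k)])"
        using snoc g False assms(2) \<open>tgt x = b\<close> reduced_word_snoc[of s "w' @ [(a, b, c)]" "(b, j, k)"]
        by (simp add: tgt_def)
      then show ?thesis using False Pair snoc g \<open>tgt x = b\<close>
        by (simp add: mult_gen_def Let_def reduced_arrow_def tgt_def del: append_assoc)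
    qed
  qed
qed

text \<open>The groupoid relation \<open>A_{a,b}^(k) A_{b,j}^(k) = A_{a,j}^(k)\<close>, with \<open>A_{a,a}^(k) = e_a\<close>.\<close>

lemma mult_gen_mult_gen_same_idx:
  assumes "reduced_arrow z" "tgt z = a" "b \<noteq> a" "j \<noteq> b"
  shows "mult_gen (mult_gen z b k) j k = (if j = a then z else mult_gen z j k)"
proof (cases z)
  case (Pair s w)
  show ?thesis
  proof (cases w rule: rev_cases)
    case Nil
    then show ?thesis using assms Pair by (auto simp: mult_gen_def tgt_def Let_def)
  next
    case (snoc w' g)
    obtain c d e where g: "g = (c, d, e)" by (cases g)
    have w': "c = tgt (s, w')" "d \<noteq> c" "w' \<noteq> [] \<longrightarrow> gidx (last w') \<noteq> e"
      using assms(1) Pair snoc g by (auto simp: reduced_arrow_def reduced_word_snoc)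
    have "d = a" using assms(2) Pair snoc g by (simp add: tgt_def)
    show ?thesis
    proof (cases "e = k")
      case True
      show ?thesis
      proof (cases "c = b")
        case True
        then show ?thesis using \<open>e = k\<close> Pair snoc g w' \<open>d = a\<close> assms(3,4)
          by (cases "w' = []") (auto simp: mult_gen_def Let_def tgt_def)
      next
        case False
        then show ?thesis using \<open>e = k\<close> Pair snoc g \<open>d = a\<close> w'
          by (auto simp: mult_gen_def Let_def tgt_def)
      qed
    next
      case False
      then show ?thesis using Pair snoc g \<open>d = a\<close> assms
        by (auto simp: mult_gen_def Let_def tgt_def butlast_append)
    qed
  qed
qed

lemma walk_append: "walk x (xs @ ys) = walk (walk x xs) ys"
  by (induction x xs rule: walk.induct) auto

lemma walk_snoc: "walk x (xs @ [(j, k)]) = mult_gen (walk x xs) j k"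
  by (simp add: walk_append)

lemma admissible_append:
  "admissible N x (xs @ ys) \<longleftrightarrow> admissible N x xs \<and> admissible N (walk x xs) ys"
  by (induction N x xs rule: admissible.induct) auto

lemma path_prob_append: "path_prob p x (xs @ ys) = path_prob p x xs * path_prob p (walk x xs) ys"
  by (induction p x xs rule: path_prob.induct) auto

lemma admissible_steps: "admissible N x ss \<Longrightarrow> set ss \<subseteq> {1..N} \<times> {-1, 1}"
  by (induction N x ss rule: admissible.induct) auto

lemma reduced_walk:
  "reduced_arrow x \<Longrightarrow> admissible N x ss \<Longrightarrow> reduced_arrow (walk x ss) \<and> fst (walk x ss) = fst x"
proof (induction x ss rule: walk.induct)
  case (1 x)
  then show ?case by simp
next
  case (2 x j k ss)
  then have "reduced_arrow (mult_gen x j k)" using reduced_mult_gen by auto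
  then show ?case using 2 by (simp add: fst_mult_gen)
qed

lemma tgt_walk_range:
  "reduced_arrow x \<Longrightarrow> tgt x \<in> {1..N} \<Longrightarrow> admissible N x ss \<Longrightarrow> tgt (walk x ss) \<in> {1..N}"
proof (induction ss arbitrary: x)
  case (Cons s ss)
  obtain j k where s: "s = (j, k)" by (cases s)
  then have "j \<in> {1..N}" "j \<noteq> tgt x" "admissible N (mult_gen x j k) ss" using Cons.prems by auto
  then show ?case using reduced_mult_gen Cons s by auto
qed simp

lemma walk_tgt_cong:
  assumes "reduced_arrow x" "reduced_arrow y" "tgt x = tgt y"
  shows "admissible N x ss = admissible N y ss \<and>
    (admissible N x ss \<longrightarrow> tgt (walk x ss) = tgt (walk y ss) \<and> path_prob p x ss = path_prob p y ss)"
  using assms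
proof (induction ss arbitrary: x y)
  case (Cons s ss)
  obtain j k where s: "s = (j, k)" by (cases s)
  show ?case
  proof (cases "j = tgt x")
    case False
    then have "reduced_arrow (mult_gen x j k) \<and> tgt (mult_gen x j k) = j"
      "reduced_arrow (mult_gen y j k) \<and> tgt (mult_gen y j k) = j"
      using reduced_mult_gen Cons.prems by auto
    then show ?thesis using Cons.IH[of "mult_gen x j k" "mult_gen y j k"] s Cons.prems by auto
  qed (use s Cons.prems in auto)
qed simp

definition word_steps :: "gen list \<Rightarrow> (nat \<times> int) list" where
  "word_steps w = map (\<lambda>g. (gtgt g, gidx g)) w"

lemma word_steps_simps [simp]:
  "word_steps [] = []"
  "word_steps (g # w) = (gtgt g, gidx g) # word_steps w"
  "word_steps (w @ [g]) = word_steps w @ [(gtgt g, gidx g)]"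
  by (simp_all add: word_steps_def)

lemma walk_word_steps:
  "reduced_word (fst x) (snd x @ w) \<Longrightarrow> walk x (word_steps w) = (fst x, snd x @ w)"
proof (induction w arbitrary: x)
  case (Cons g w)
  obtain s v where x: "x = (s, v)" by (cases x)
  obtain a b c where g: "g = (a, b, c)" by (cases g)
  have "reduced_word s (v @ [g])"
    using Cons.prems x reduced_word_appendD[of s "v @ [g]" w] by simp
  then have "mult_gen x b c = (s, v @ [g])"
    using x g by (auto simp: mult_gen_def Let_def reduced_word_snoc tgt_def)
  then show ?case using Cons.IH[of "(s, v @ [g])"] Cons.prems x g by simp
qed simp

lemma reduced_walk_word_steps:
  assumes "reduced_arrow x" "reduced_word (tgt x) w"
  shows "reduced_arrow (walk x (word_steps w)) \<and> tgt (walk x (word_steps w)) = tgt (tgt x, w)"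
  using assms(2)
proof (induction w rule: rev_induct)
  case Nil
  then show ?case using assms by (simp add: tgt_def)
next
  case (snoc g w)
  have w: "reduced_word (tgt x) w" "gsrc g = tgt (tgt x, w)" "gtgt g \<noteq> gsrc g"
    using snoc.prems reduced_word_snoc by auto
  then have "gtgt g \<noteq> tgt (walk x (word_steps w))" using snoc.IH by simp
  then show ?case using reduced_mult_gen[of "walk x (word_steps w)" "gtgt g" "gidx g"] snoc.IH w
    by (simp add: walk_snoc tgt_snoc)
qed

lemma mult_gen_walk_word_steps:
  assumes "reduced_arrow x" "reduced_word (tgt x) w" "j \<noteq> tgt (tgt x, w)"
  shows "mult_gen (walk x (word_steps w)) j k = walk x (word_steps (snd (mult_gen (tgt x, w) j k)))"
proof (cases w rule: rev_cases)
  case Nil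
  have "mult_gen (tgt x, []) j k = (tgt x, [(tgt x, j, k)])" by (simp add: mult_gen_def tgt_def Let_def)
  then show ?thesis using Nil by simp
next
  case (snoc w' g)
  obtain a b c where g: "g = (a, b, c)" by (cases g)
  have w': "reduced_word (tgt x) w'" "a = tgt (tgt x, w')" "b \<noteq> a"
    using assms(2) snoc g reduced_word_snoc by auto
  define z where "z = walk x (word_steps w')"
  have z: "reduced_arrow z" "tgt z = a" using reduced_walk_word_steps[OF assms(1) w'(1)] w' z_def by auto
  have "j \<noteq> b" using assms(3) snoc g by (simp add: tgt_def)
  note relation = mult_gen_mult_gen_same_idx[OF z w'(3) this]
  have walk_w: "walk x (word_steps w) = mult_gen z b c" using snoc g z_def by (simp add: walk_snoc)
  consider "c = k" "a = j" | "c = k" "a \<noteq> j" | "c \<noteq> k" by blast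
  then show ?thesis
  proof cases
    case 1
    then show ?thesis using walk_w relation snoc g z_def by (simp add: mult_gen_def Let_def tgt_def)
  next
    case 2
    then have "snd (mult_gen (tgt x, w) j k) = w' @ [(a, j, k)]" using snoc g
      by (simp add: mult_gen_def Let_def tgt_def)
    then show ?thesis using 2 walk_w relation z_def by (simp add: walk_snoc)
  next
    case 3
    then have "snd (mult_gen (tgt x, w) j k) = w @ [(b, j, k)]" using snoc g
      by (simp add: mult_gen_def Let_def tgt_def)
    then show ?thesis by (simp add: walk_snoc)
  qed
qed

text \<open>Left translation invariance: walking from \<open>x\<close> amounts to walking from the unit at
  \<open>tgt x\<close> and multiplying the reduced word reached onto \<open>x\<close>.\<close>

lemma walk_left_translation:
  assumes "reduced_arrow x" "admissible N (tgt x, []) ss"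
  shows "walk x ss = walk x (word_steps (snd (walk (tgt x, []) ss)))"
  using assms(2)
proof (induction ss rule: rev_induct)
  case (snoc s ss)
  obtain j k where s: "s = (j, k)" by (cases s)
  define y where "y = walk (tgt x, []) ss"
  have ss: "admissible N (tgt x, []) ss" and "j \<noteq> tgt y"
    using snoc.prems s admissible_append[of N "(tgt x, [])" ss "[s]"] y_def by auto
  have "reduced_arrow y" "fst y = tgt x"
    using reduced_walk[of "(tgt x, [])" N ss] ss y_def by (auto simp: reduced_arrow_def)
  then have y: "reduced_word (tgt x) (snd y)" "y = (tgt x, snd y)"
    by (auto simp: reduced_arrow_def intro: prod_eqI)
  have "walk x (ss @ [s]) = mult_gen (walk x (word_steps (snd y))) j k"
    using snoc.IH[OF ss] s y_def by (simp add: walk_snoc)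
  also have "\<dots> = walk x (word_steps (snd (mult_gen y j k)))"
    using mult_gen_walk_word_steps[OF assms(1) y(1), of j k] \<open>j \<noteq> tgt y\<close> y(2) by simp
  also have "mult_gen y j k = walk (tgt x, []) (ss @ [s])" using s y_def by (simp add: walk_snoc)
  finally show ?case .
qed simp

section \<open>First passages\<close>

definition step_seqs :: "nat \<Rightarrow> arrow \<Rightarrow> nat \<Rightarrow> (nat \<times> int) list set" where
  "step_seqs N x m = {ss. length ss = m \<and> set ss \<subseteq> {1..N} \<times> {-1, 1} \<and> admissible N x ss}"

lemma finite_step_seqs: "finite (step_seqs N x m)"
proof (rule finite_subset)
  show "step_seqs N x m \<subseteq> {ss. set ss \<subseteq> {1..N} \<times> {-1, 1} \<and> length ss = m}"
    by (auto simp: step_seqs_def)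
  show "finite {ss. set ss \<subseteq> {1..N} \<times> {-1::int, 1} \<and> length ss = m}"
    by (rule finite_lists_length_eq) auto
qed

lemma step_seqs_Suc:
  "step_seqs N x (Suc m) = (\<lambda>(s, ss). s # ss) `
     (SIGMA s:({1..N} - {tgt x}) \<times> {-1, 1}. step_seqs N (mult_gen x (fst s) (snd s)) m)"
  (is "?L = ?R")
proof -
  have "ss \<in> ?L \<longleftrightarrow> ss \<in> ?R" for ss
  proof
    assume "ss \<in> ?L"
    then obtain j k t where "ss = (j, k) # t" "length t = m" "admissible N x ((j, k) # t)"
      by (auto simp: step_seqs_def length_Suc_conv)
    then show "ss \<in> ?R"
      using admissible_steps[of N "mult_gen x j k" t] by (auto simp: step_seqs_def image_iff)
  qed (auto simp: step_seqs_def)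
  then show ?thesis by blast
qed

definition first_passages :: "nat \<Rightarrow> nat \<Rightarrow> nat \<Rightarrow> int \<Rightarrow> nat \<Rightarrow> (nat \<times> int) list set" where
  "first_passages N i j k m =
     {ss. length ss = m \<and> set ss \<subseteq> {1..N} \<times> {-1, 1} \<and> admissible N (unit_arrow i) ss
        \<and> walk (unit_arrow i) ss = (i, [(i, j, k)])
        \<and> (\<forall>m'<m. walk (unit_arrow i) (take m' ss) \<noteq> (i, [(i, j, k)]))}"

definition first_passages_before :: "nat \<Rightarrow> nat \<Rightarrow> nat \<Rightarrow> int \<Rightarrow> nat \<Rightarrow> (nat \<times> int) list set" where
  "first_passages_before N i j k T = (\<Union>m<T. first_passages N i j k m)"

lemma first_hit_prob_eq_sum:
  "first_hit_prob N p (unit_arrow i) (i, [(i, j, k)]) m =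
     sum (path_prob p (unit_arrow i)) (first_passages N i j k m)"
  by (simp add: first_hit_prob_def first_passages_def)

lemma first_passages_subset_step_seqs: "first_passages N i j k m \<subseteq> step_seqs N (unit_arrow i) m"
  by (auto simp: first_passages_def step_seqs_def)

lemma finite_first_passages: "finite (first_passages N i j k m)"
  using finite_subset[OF first_passages_subset_step_seqs finite_step_seqs] .

lemma finite_first_passages_before: "finite (first_passages_before N i j k T)"
  by (simp add: first_passages_before_def finite_first_passages)

lemma first_passages_before_prefix_free:
  assumes "s \<in> first_passages_before N i j k T" "s @ t \<in> first_passages_before N i j k T"
  shows "t = []"
proof (rule ccontr)
  assume "t \<noteq> []"
  then have "length s < length (s @ t)" by simp
  moreover have "walk (unit_arrow i) s = (i, [(i, j, k)])"
    using assms(1) by (auto simp: first_passages_before_def first_passages_def)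
  moreover have "\<forall>m'<length (s @ t). walk (unit_arrow i) (take m' (s @ t)) \<noteq> (i, [(i, j, k)])"
    using assms(2) by (auto simp: first_passages_before_def first_passages_def)
  ultimately show False by (metis append_eq_conv_conj)
qed

lemma weighted_first_passages_before:
  "(\<Sum>s\<in>first_passages_before N i j k T. lam ^ length s * path_prob p (unit_arrow i) s)
     = (\<Sum>m<T. lam ^ m * first_hit_prob N p (unit_arrow i) (i, [(i, j, k)]) m)"
proof -
  have "(\<Sum>s\<in>first_passages_before N i j k T. lam ^ length s * path_prob p (unit_arrow i) s)
     = (\<Sum>m<T. \<Sum>s\<in>first_passages N i j k m. lam ^ length s * path_prob p (unit_arrow i) s)"
    unfolding first_passages_before_def
    by (rule sum.UNION_disjoint) (simp, simp add: finite_first_passages, auto simp: first_passages_def)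
  also have "\<dots> = (\<Sum>m<T. \<Sum>s\<in>first_passages N i j k m. lam ^ m * path_prob p (unit_arrow i) s)"
    by (intro sum.cong refl) (auto simp: first_passages_def)
  finally show ?thesis by (simp add: first_hit_prob_eq_sum sum_distrib_left)
qed

text \<open>Step sequences from \<open>e_i\<close> that pass successively through the reduced words
  \<open>A_{i,j1}^(k)\<close>, \<open>A_{i,j1}^(k) A_{j1,j2}^(-k)\<close>, \<dots> up to length \<open>n\<close>, each new letter being
  reached by a first passage of length below \<open>T\<close>; the truncation keeps the sets finite.\<close>

fun passage_chains :: "nat \<Rightarrow> nat \<Rightarrow> nat \<Rightarrow> nat \<Rightarrow> int \<Rightarrow> (nat \<times> int) list set" where
  "passage_chains N T 0 i k = {[]}"
| "passage_chains N T (Suc n) i k = (\<lambda>(j, s, t). s @ t) `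
     (SIGMA j:{1..N} - {i}. SIGMA s:first_passages_before N i j k T. passage_chains N T n j (-k))"

lemma finite_passage_chains: "finite (passage_chains N T n i k)"
  by (induction n arbitrary: i k) (auto simp: finite_first_passages_before)

lemma walk_first_passage_append:
  assumes "j \<noteq> i" "k \<in> {-1, 1}" and s: "s \<in> first_passages_before N i j k T"
    and t: "admissible N (unit_arrow j) t" "walk (unit_arrow j) t = (j, u)" "reduced_word j u"
      "u \<noteq> [] \<longrightarrow> gidx (hd u) = -k"
  shows "admissible N (unit_arrow i) (s @ t) \<and> walk (unit_arrow i) (s @ t) = (i, (i, j, k) # u)
     \<and> path_prob p (unit_arrow i) (s @ t) = path_prob p (unit_arrow i) s * path_prob p (unit_arrow j) t"
proof -
  have s_walk: "admissible N (unit_arrow i) s" "walk (unit_arrow i) s = (i, [(i, j, k)])"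
    using s by (auto simp: first_passages_before_def first_passages_def)
  define x where "x = (i, [(i, j, k)])"
  have x: "reduced_arrow x" "tgt x = j" using assms(1) by (auto simp: x_def reduced_arrow_def tgt_def)
  have unit_j: "unit_arrow j = (tgt x, [])" using x by (simp add: unit_arrow_def)
  have t_from_x: "admissible N x t" "path_prob p (unit_arrow j) t = path_prob p x t"
    using walk_tgt_cong[OF reduced_arrow_unit x(1), where N = N and ss = t and p = p] tgt_unit_arrow x(2) t(1) by auto
  have "k \<noteq> -k" using assms(2) by auto
  then have "reduced_word (fst x) (snd x @ u)" using t(3,4) assms(1) by (auto simp: x_def)
  then have "walk x t = (i, (i, j, k) # u)"
    using walk_left_translation[OF x(1), of N t] t(1,2) unit_j walk_word_steps by (simp add: x_def)
  then show ?thesis using s_walk t_from_x x_def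
    by (simp add: admissible_append walk_append path_prob_append)
qed

lemma passage_chain_walk:
  assumes "k \<in> {-1, 1}" "t \<in> passage_chains N T n i k"
  shows "admissible N (unit_arrow i) t \<and>
    (\<exists>u. walk (unit_arrow i) t = (i, u) \<and> length u = n \<and> reduced_word i u \<and> (u \<noteq> [] \<longrightarrow> gidx (hd u) = k))"
  using assms
proof (induction n arbitrary: i k t)
  case 0
  then show ?case by (auto simp: unit_arrow_def)
next
  case (Suc n)
  obtain j s t' where jst: "t = s @ t'" "j \<in> {1..N} - {i}" "s \<in> first_passages_before N i j k T"
    "t' \<in> passage_chains N T n j (-k)"
  proof -
    from Suc.prems(2) obtain x where
      "x \<in> (SIGMA j:{1..N} - {i}. SIGMA s:first_passages_before N i j k T. passage_chains N T n j (-k))"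
      "t = (\<lambda>(j, s, t). s @ t) x"
      by auto
    then show ?thesis using that by (cases x) auto
  qed
  have "-k \<in> {-1, 1}" using Suc.prems by auto
  then obtain u where u: "admissible N (unit_arrow j) t'" "walk (unit_arrow j) t' = (j, u)" "length u = n"
    "reduced_word j u" "u \<noteq> [] \<longrightarrow> gidx (hd u) = -k"
    using Suc.IH jst(4) by blast
  have "j \<noteq> i" using jst by auto
  with walk_first_passage_append[OF this Suc.prems(1) jst(3) u(1,2,4,5)]
  show ?case using jst u Suc.prems(1) by auto
qed

lemma inj_on_append_prefix_free:
  assumes "\<And>s t. s \<in> A \<Longrightarrow> s @ t \<in> A \<Longrightarrow> t = []"
  shows "inj_on (\<lambda>(s, t). s @ t) (SIGMA s:A. B s)"
proof (rule inj_onI, clarsimp)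
  fix s t s' t' assume "s \<in> A" "s' \<in> A" "s @ t = s' @ t'"
  then obtain us where "(s = s' @ us \<and> us @ t = t') \<or> (s @ us = s' \<and> t = us @ t')"
    unfolding append_eq_append_conv2 by blast
  moreover have "us = []" using calculation assms \<open>s \<in> A\<close> \<open>s' \<in> A\<close> by blast
  ultimately show "s = s' \<and> t = t'" by simp
qed

lemma inj_on_passage_chains_Suc:
  assumes "k \<in> {-1, 1}"
  shows "inj_on (\<lambda>(j, s, t). s @ t)
    (SIGMA j:{1..N} - {i}. SIGMA s:first_passages_before N i j k T. passage_chains N T n j (-k))"
    (is "inj_on _ ?D")
proof (rule inj_onI)
  fix a b assume "a \<in> ?D" "b \<in> ?D" "(case a of (j, s, t) \<Rightarrow> s @ t) = (case b of (j, s, t) \<Rightarrow> s @ t)"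
  then obtain j s t j' s' t' where ab: "a = (j, s, t)" "b = (j', s', t')"
    and m: "j \<noteq> i" "s \<in> first_passages_before N i j k T" "t \<in> passage_chains N T n j (-k)"
      "j' \<noteq> i" "s' \<in> first_passages_before N i j' k T" "t' \<in> passage_chains N T n j' (-k)"
    and st: "s @ t = s' @ t'"
    by (cases a, cases b) auto
  have "-k \<in> {-1, 1}" using assms by auto
  have "\<exists>u. walk (unit_arrow i) (s @ t) = (i, (i, j, k) # u)"
    if "j \<noteq> i" "s \<in> first_passages_before N i j k T" "t \<in> passage_chains N T n j (-k)" for j s t
    using passage_chain_walk[OF \<open>-k \<in> {-1, 1}\<close> that(3)] walk_first_passage_append[OF that(1) assms that(2)]
    by fastforce
  then have "j = j'" using m st by (metis list.inject prod.inject)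
  have "inj_on (\<lambda>(s, t). s @ t) (SIGMA s:first_passages_before N i j k T. passage_chains N T n j (-k))"
    by (rule inj_on_append_prefix_free) (rule first_passages_before_prefix_free)
  then have "(s, t) = (s', t')"
    by (rule inj_onD) (use m st \<open>j = j'\<close> in auto)
  then show "a = b" using ab \<open>j = j'\<close> by simp
qed

section \<open>Path probabilities and the bound on chains of first passages\<close>

locale groupoid_walk =
  fixes N :: nat and p :: "nat \<Rightarrow> nat \<Rightarrow> int \<Rightarrow> real"
  assumes p_pos: "\<And>i j k. i \<in> {1..N} \<Longrightarrow> j \<in> {1..N} \<Longrightarrow> i \<noteq> j \<Longrightarrow> k \<in> {-1, 1} \<Longrightarrow>
                  0 < p i j k \<and> p i j k < 1"
    and p_sum: "\<And>i. i \<in> {1..N} \<Longrightarrow> (\<Sum>j \<in> {1..N} - {i}. \<Sum>k \<in> {-1, 1}. p i j k) = 1"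
begin

lemma path_prob_nonneg:
  "reduced_arrow x \<Longrightarrow> tgt x \<in> {1..N} \<Longrightarrow> admissible N x ss \<Longrightarrow> 0 \<le> path_prob p x ss"
proof (induction ss arbitrary: x)
  case (Cons s ss)
  obtain j k where s: "s = (j, k)" by (cases s)
  then have step: "j \<in> {1..N}" "j \<noteq> tgt x" "k \<in> {-1, 1}" "admissible N (mult_gen x j k) ss"
    using Cons.prems by auto
  moreover have "reduced_arrow (mult_gen x j k)" "tgt (mult_gen x j k) = j"
    using reduced_mult_gen[OF Cons.prems(1) step(2)] by auto
  ultimately have "0 \<le> path_prob p (mult_gen x j k) ss" using Cons.IH by auto
  moreover have "0 < p (tgt x) j k" using p_pos[of "tgt x" j k] Cons.prems step by auto
  ultimately show ?case using s by simp
qed simp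

lemma sum_path_prob_step_seqs:
  "reduced_arrow x \<Longrightarrow> tgt x \<in> {1..N} \<Longrightarrow> sum (path_prob p x) (step_seqs N x m) = 1"
proof (induction m arbitrary: x)
  case 0
  have "step_seqs N x 0 = {[]}" by (auto simp: step_seqs_def)
  then show ?case by simp
next
  case (Suc m)
  let ?S = "({1..N} - {tgt x}) \<times> {-1::int, 1}"
  let ?next = "\<lambda>s. mult_gen x (fst s) (snd s)"
  have inj: "inj_on (\<lambda>(s, ss). s # ss) (SIGMA s:?S. step_seqs N (?next s) m)"
    by (auto simp: inj_on_def)
  have "sum (path_prob p x) (step_seqs N x (Suc m)) =
     (\<Sum>s \<in> ?S. \<Sum>ss \<in> step_seqs N (?next s) m. path_prob p x (s # ss))"
    unfolding step_seqs_Suc sum.reindex[OF inj]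
    by (subst sum.Sigma) (auto simp: finite_step_seqs case_prod_beta)
  also have "\<dots> = (\<Sum>s \<in> ?S. p (tgt x) (fst s) (snd s))"
  proof (rule sum.cong[OF refl])
    fix s assume "s \<in> ?S"
    then obtain j k where s: "s = (j, k)" "j \<in> {1..N}" "j \<noteq> tgt x" by (cases s) blast
    then have "reduced_arrow (mult_gen x j k)" "tgt (mult_gen x j k) \<in> {1..N}"
      using reduced_mult_gen[OF Suc.prems(1)] by auto
    then show "(\<Sum>ss \<in> step_seqs N (?next s) m. path_prob p x (s # ss)) = p (tgt x) (fst s) (snd s)"
      using Suc.IH s by (simp add: sum_distrib_left[symmetric])
  qed
  also have "\<dots> = (\<Sum>j \<in> {1..N} - {tgt x}. \<Sum>k \<in> {-1, 1}. p (tgt x) j k)"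
    by (subst sum.cartesian_product) (simp add: case_prod_beta)
  also have "\<dots> = 1" using p_sum Suc.prems by simp
  finally show ?case .
qed

text \<open>Extending every path of a prefix-free set to the common length \<open>L\<close> embeds it, with
  the same total probability, into the paths of length \<open>L\<close>.\<close>

lemma prefix_free_path_prob_le_1:
  assumes x: "reduced_arrow x" "tgt x \<in> {1..N}" and "finite A"
    and A: "\<And>s. s \<in> A \<Longrightarrow> admissible N x s \<and> length s \<le> L"
    and prefix_free: "\<And>s t. s \<in> A \<Longrightarrow> s @ t \<in> A \<Longrightarrow> t = []"
  shows "sum (path_prob p x) A \<le> 1"
proof -
  let ?ext = "\<lambda>s. step_seqs N (walk x s) (L - length s)"
  have "sum (path_prob p x) A = (\<Sum>s\<in>A. \<Sum>t\<in>?ext s. path_prob p x (s @ t))"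
  proof (rule sum.cong[OF refl])
    fix s assume "s \<in> A"
    then have "reduced_arrow (walk x s)" "tgt (walk x s) \<in> {1..N}"
      using A reduced_walk[OF x(1)] tgt_walk_range[OF x] by auto
    then show "path_prob p x s = (\<Sum>t\<in>?ext s. path_prob p x (s @ t))"
      by (simp add: path_prob_append sum_distrib_left[symmetric] sum_path_prob_step_seqs)
  qed
  also have "\<dots> = (\<Sum>(s, t)\<in>(SIGMA s:A. ?ext s). path_prob p x (s @ t))"
    by (rule sum.Sigma) (auto simp: \<open>finite A\<close> finite_step_seqs)
  also have "\<dots> = sum (path_prob p x) ((\<lambda>(s, t). s @ t) ` (SIGMA s:A. ?ext s))"
    by (subst sum.reindex[OF inj_on_append_prefix_free[OF prefix_free]]) (auto simp: case_prod_beta)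
  also have "\<dots> \<le> sum (path_prob p x) (step_seqs N x L)"
  proof (rule sum_mono2[OF finite_step_seqs])
    show "(\<lambda>(s, t). s @ t) ` (SIGMA s:A. ?ext s) \<subseteq> step_seqs N x L"
      using A admissible_steps by (fastforce simp: step_seqs_def admissible_append)
    show "0 \<le> path_prob p x u" if "u \<in> step_seqs N x L - (\<lambda>(s, t). s @ t) ` (SIGMA s:A. ?ext s)" for u
      using path_prob_nonneg[OF x] that by (auto simp: step_seqs_def)
  qed
  also have "\<dots> = 1" using sum_path_prob_step_seqs[OF x] .
  finally show ?thesis .
qed

lemma weighted_path_prob_le:
  assumes x: "reduced_arrow x" "tgt x \<in> {1..N}" and "finite A" and lam: "0 \<le> lam" "lam < 1"
    and A: "\<And>s. s \<in> A \<Longrightarrow> admissible N x s"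
  shows "(\<Sum>s\<in>A. lam ^ length s * path_prob p x s) \<le> 1 / (1 - lam)"
proof -
  have "(\<Sum>s\<in>A. lam ^ length s * path_prob p x s) =
     (\<Sum>m\<in>length ` A. lam ^ m * (\<Sum>s\<in>{s\<in>A. length s = m}. path_prob p x s))"
    by (subst sum.group[symmetric, of _ _ length]) (simp_all add: \<open>finite A\<close> sum_distrib_left)
  also have "\<dots> \<le> (\<Sum>m\<in>length ` A. lam ^ m)"
  proof (rule sum_mono)
    fix m
    have "(\<Sum>s\<in>{s\<in>A. length s = m}. path_prob p x s) \<le> sum (path_prob p x) (step_seqs N x m)"
    proof (rule sum_mono2[OF finite_step_seqs])
      show "{s \<in> A. length s = m} \<subseteq> step_seqs N x m"
        using A admissible_steps unfolding step_seqs_def by blast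
      show "0 \<le> path_prob p x s" if "s \<in> step_seqs N x m - {s \<in> A. length s = m}" for s
        using path_prob_nonneg[OF x] that by (auto simp: step_seqs_def)
    qed
    then show "lam ^ m * (\<Sum>s\<in>{s\<in>A. length s = m}. path_prob p x s) \<le> lam ^ m"
      using sum_path_prob_step_seqs[OF x] lam by (simp add: mult_left_le)
  qed
  also have "\<dots> \<le> (\<Sum>m. lam ^ m)"
    by (rule sum_le_suminf) (use lam in \<open>auto intro: summable_geometric simp: \<open>finite A\<close>\<close>)
  also have "\<dots> = 1 / (1 - lam)" using suminf_geometric[of lam] lam by simp
  finally show ?thesis .
qed

lemma first_hit_prob_nonneg:
  "i \<in> {1..N} \<Longrightarrow> 0 \<le> first_hit_prob N p (unit_arrow i) (i, [(i, j, k)]) m"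
  unfolding first_hit_prob_eq_sum
  using path_prob_nonneg[OF reduced_arrow_unit] tgt_unit_arrow
  by (intro sum_nonneg) (auto simp: first_passages_def)

lemma sum_first_hit_prob_le_1:
  assumes "i \<in> {1..N}"
  shows "(\<Sum>m<T. first_hit_prob N p (unit_arrow i) (i, [(i, j, k)]) m) \<le> 1"
proof -
  have "(\<Sum>m<T. first_hit_prob N p (unit_arrow i) (i, [(i, j, k)]) m)
     = sum (path_prob p (unit_arrow i)) (first_passages_before N i j k T)"
    using weighted_first_passages_before[where lam = 1 and N = N and p = p] by simp
  also have "\<dots> \<le> 1"
  proof (rule prefix_free_path_prob_le_1[OF reduced_arrow_unit _ finite_first_passages_before])
    show "tgt (unit_arrow i) \<in> {1..N}" using assms tgt_unit_arrow by simp
    show "admissible N (unit_arrow i) s \<and> length s \<le> T" if "s \<in> first_passages_before N i j k T" for s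
      using that by (auto simp: first_passages_before_def first_passages_def)
  qed (rule first_passages_before_prefix_free)
  finally show ?thesis .
qed

lemma R_fun_summable:
  assumes "i \<in> {1..N}" "0 \<le> lam" "lam \<le> 1"
  shows "summable (\<lambda>m. lam ^ m * first_hit_prob N p (unit_arrow i) (i, [(i, j, k)]) m)"
proof (rule summable_comparison_test')
  show "summable (\<lambda>m. first_hit_prob N p (unit_arrow i) (i, [(i, j, k)]) m)"
    by (rule summableI_nonneg_bounded[where x = 1])
      (use assms first_hit_prob_nonneg sum_first_hit_prob_le_1 in auto)
  show "norm (lam ^ m * first_hit_prob N p (unit_arrow i) (i, [(i, j, k)]) m)
      \<le> first_hit_prob N p (unit_arrow i) (i, [(i, j, k)]) m" for m
    using first_hit_prob_nonneg[OF assms(1)] assms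
    by (simp add: abs_mult mult_left_le_one_le power_le_one)
qed

lemma R_fun_nonneg:
  assumes "i \<in> {1..N}" "0 \<le> lam" "lam \<le> 1"
  shows "0 \<le> R_fun N p i j k lam"
  unfolding R_fun_def
  by (rule suminf_nonneg[OF R_fun_summable[OF assms]]) (use assms first_hit_prob_nonneg in auto)

lemma R_fun_pos:
  assumes "i \<in> {1..N}" "j \<in> {1..N}" "i \<noteq> j" "k \<in> {-1, 1}" "0 < lam" "lam \<le> 1"
  shows "0 < R_fun N p i j k lam"
proof -
  have one_step: "[(j, k)] \<in> first_passages N i j k 1"
    using assms by (auto simp: first_passages_def unit_arrow_def mult_gen_def tgt_def)
  have "0 < p i j k" using p_pos assms by auto
  also have "p i j k = path_prob p (unit_arrow i) [(j, k)]" by (simp add: unit_arrow_def tgt_def)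
  also have "\<dots> \<le> first_hit_prob N p (unit_arrow i) (i, [(i, j, k)]) 1"
    unfolding first_hit_prob_eq_sum
    by (rule member_le_sum[OF one_step _ finite_first_passages])
      (use path_prob_nonneg[OF reduced_arrow_unit] tgt_unit_arrow assms(1) in \<open>auto simp: first_passages_def\<close>)
  finally have "0 < (\<Sum>m\<in>{1}. lam ^ m * first_hit_prob N p (unit_arrow i) (i, [(i, j, k)]) m)"
    using assms by simp
  also have "\<dots> \<le> R_fun N p i j k lam"
    unfolding R_fun_def
    by (rule sum_le_suminf[OF R_fun_summable]) (use assms first_hit_prob_nonneg in auto)
  finally show ?thesis .
qed

definition weighted_prob :: "real \<Rightarrow> nat \<Rightarrow> (nat \<times> int) list set \<Rightarrow> real" where
  "weighted_prob lam i A = (\<Sum>s\<in>A. lam ^ length s * path_prob p (unit_arrow i) s)"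

lemma weighted_prob_passage_chains_Suc:
  assumes k: "k \<in> {-1, 1}"
  shows "weighted_prob lam i (passage_chains N T (Suc n) i k) =
    (\<Sum>j\<in>{1..N} - {i}. weighted_prob lam i (first_passages_before N i j k T) *
                        weighted_prob lam j (passage_chains N T n j (-k)))"
proof -
  let ?D = "SIGMA j:{1..N} - {i}. SIGMA s:first_passages_before N i j k T. passage_chains N T n j (-k)"
  let ?w = "\<lambda>i s. lam ^ length s * path_prob p (unit_arrow i) s"
  have factor: "?w i (s @ t) = ?w i s * ?w j t"
    if "(j, s, t) \<in> ?D" for j s t
  proof -
    from that have jst: "j \<noteq> i" "s \<in> first_passages_before N i j k T" "t \<in> passage_chains N T n j (-k)"
      by auto
    have "-k \<in> {-1, 1}" using k by auto
    then obtain u where "admissible N (unit_arrow j) t" "walk (unit_arrow j) t = (j, u)"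
      "reduced_word j u" "u \<noteq> [] \<longrightarrow> gidx (hd u) = -k"
      using passage_chain_walk jst(3) by blast
    then show ?thesis
      using walk_first_passage_append[OF jst(1) k jst(2)] by (simp add: power_add)
  qed
  have "weighted_prob lam i (passage_chains N T (Suc n) i k) = (\<Sum>(j, s, t)\<in>?D. ?w i (s @ t))"
    unfolding weighted_prob_def passage_chains.simps
    by (subst sum.reindex[OF inj_on_passage_chains_Suc[OF k]]) (simp add: case_prod_beta)
  also have "\<dots> = (\<Sum>(j, s, t)\<in>?D. ?w i s * ?w j t)"
  proof (rule sum.cong[OF refl])
    fix x assume "x \<in> ?D"
    then show "(case x of (j, s, t) \<Rightarrow> ?w i (s @ t)) = (case x of (j, s, t) \<Rightarrow> ?w i s * ?w j t)"
      using factor by (cases x) auto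
  qed
  also have "\<dots> = (\<Sum>j\<in>{1..N} - {i}. \<Sum>s\<in>first_passages_before N i j k T.
                    \<Sum>t\<in>passage_chains N T n j (-k). ?w i s * ?w j t)"
    by (simp add: sum.Sigma finite_first_passages_before finite_passage_chains case_prod_beta)
  finally show ?thesis
    by (simp add: weighted_prob_def sum_product)
qed

text \<open>Chains of different lengths end at reduced words of different lengths, so they are
  disjoint and together form a single set of admissible paths.\<close>

lemma sum_weighted_prob_passage_chains_le:
  assumes i: "i \<in> {1..N}" and k: "k \<in> {-1, 1}" and lam: "0 \<le> lam" "lam < 1"
  shows "(\<Sum>n<M. weighted_prob lam i (passage_chains N T n i k)) \<le> 1 / (1 - lam)"
proof -
  have disjoint: "passage_chains N T n i k \<inter> passage_chains N T n' i k = {}" if "n \<noteq> n'" for n n'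
    using passage_chain_walk[OF k, of _ N T n i] passage_chain_walk[OF k, of _ N T n' i] that by fastforce
  have "(\<Sum>n<M. weighted_prob lam i (passage_chains N T n i k)) =
      weighted_prob lam i (\<Union>n<M. passage_chains N T n i k)"
    unfolding weighted_prob_def
    by (rule sum.UNION_disjoint[symmetric]) (auto simp: finite_passage_chains disjoint)
  also have "\<dots> \<le> 1 / (1 - lam)"
    unfolding weighted_prob_def
    by (rule weighted_path_prob_le[OF reduced_arrow_unit _ _ lam])
      (use i tgt_unit_arrow passage_chain_walk[OF k] in \<open>auto simp: finite_passage_chains\<close>)
  finally show ?thesis .
qed

end

text \<open>The sum, over reduced words of length \<open>n\<close> from \<open>i\<close> with first upper index \<open>k\<close>, of the
  product of the \<open>R\<close>'s of their letters.\<close>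

fun R_word_sum :: "nat \<Rightarrow> (nat \<Rightarrow> nat \<Rightarrow> int \<Rightarrow> real) \<Rightarrow> real \<Rightarrow> nat \<Rightarrow> nat \<Rightarrow> int \<Rightarrow> real" where
  "R_word_sum N p lam 0 i k = 1"
| "R_word_sum N p lam (Suc n) i k = (\<Sum>j\<in>{1..N} - {i}. R_fun N p i j k lam * R_word_sum N p lam n j (-k))"

context groupoid_walk
begin

lemma weighted_prob_passage_chains_LIMSEQ:
  assumes "i \<in> {1..N}" "k \<in> {-1, 1}" "0 \<le> lam" "lam \<le> 1"
  shows "(\<lambda>T. weighted_prob lam i (passage_chains N T n i k)) \<longlonglongrightarrow> R_word_sum N p lam n i k"
  using assms(1,2)
proof (induction n arbitrary: i k)
  case 0
  then show ?case by (simp add: weighted_prob_def)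
next
  case (Suc n)
  have first_passage_limit:
    "(\<lambda>T. weighted_prob lam i (first_passages_before N i j k T)) \<longlonglongrightarrow> R_fun N p i j k lam" for j
    unfolding weighted_prob_def weighted_first_passages_before R_fun_def
    by (rule summable_LIMSEQ[OF R_fun_summable[OF Suc.prems(1) assms(3,4)]])
  have "-k \<in> {-1, 1}" using Suc.prems by auto
  then have "(\<lambda>T. \<Sum>j\<in>{1..N} - {i}. weighted_prob lam i (first_passages_before N i j k T) *
                                    weighted_prob lam j (passage_chains N T n j (-k)))
     \<longlonglongrightarrow> (\<Sum>j\<in>{1..N} - {i}. R_fun N p i j k lam * R_word_sum N p lam n j (-k))"
    using first_passage_limit Suc.IH by (intro tendsto_sum tendsto_mult) auto
  then show ?case using weighted_prob_passage_chains_Suc[OF Suc.prems(2)] by simp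
qed

lemma sum_R_word_sum_le:
  assumes "i \<in> {1..N}" "k \<in> {-1, 1}" "0 \<le> lam" "lam < 1"
  shows "(\<Sum>n<M. R_word_sum N p lam n i k) \<le> 1 / (1 - lam)"
proof (rule LIMSEQ_le_const2)
  show "(\<lambda>T. \<Sum>n<M. weighted_prob lam i (passage_chains N T n i k)) \<longlonglongrightarrow> (\<Sum>n<M. R_word_sum N p lam n i k)"
    by (rule tendsto_sum) (use weighted_prob_passage_chains_LIMSEQ assms in auto)
qed (use sum_weighted_prob_passage_chains_le[OF assms] in auto)

end

section \<open>The matrix \<open>K\<close>\<close>

definition block_obj :: "nat \<Rightarrow> nat \<Rightarrow> nat" where
  "block_obj N a = (if a < N then a + 1 else a - N + 1)"

definition block_sign :: "nat \<Rightarrow> nat \<Rightarrow> int" where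
  "block_sign N a = (if a < N then 1 else -1)"

lemma block_obj_range: "a < 2 * N \<Longrightarrow> block_obj N a \<in> {1..N}"
  by (auto simp: block_obj_def)

lemma block_sign_range: "block_sign N a \<in> {-1, 1}"
  by (auto simp: block_sign_def)

lemma exists_block_index_avoiding:
  assumes "N \<ge> 3" "x \<in> {1..N}" "y \<in> {1..N}"
  shows "\<exists>c < 2 * N. (c < N) = upper \<and> block_obj N c \<noteq> x \<and> block_obj N c \<noteq> y"
proof -
  have "\<exists>j :: nat. (j = 1 \<or> j = 2 \<or> j = 3) \<and> j \<noteq> x \<and> j \<noteq> y" by presburger
  then obtain j :: nat where "j = 1 \<or> j = 2 \<or> j = 3" "j \<noteq> x" "j \<noteq> y" by blast
  with assms(1) have j: "j \<in> {1..N}" "j \<noteq> x" "j \<noteq> y" by auto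
  show ?thesis
  proof (cases upper)
    case True
    then show ?thesis using j by (intro exI[of _ "j - 1"]) (auto simp: block_obj_def)
  next
    case False
    then show ?thesis using j by (intro exI[of _ "j - 1 + N"]) (auto simp: block_obj_def)
  qed
qed

lemma dim_K_mat [simp]:
  "dim_row (K_mat N p Kn lam z) = 2 * N" "dim_col (K_mat N p Kn lam z) = 2 * N"
  by (simp_all add: K_mat_def)

lemma K_mat_carrier: "K_mat N p Kn lam z \<in> carrier_mat (2 * N) (2 * N)"
  by (rule carrier_matI) simp_all

lemma K_mat_index:
  assumes "a < 2 * N" "c < 2 * N"
  shows "K_mat N p Kn lam z $$ (a, c) =
    (if (a < N) \<noteq> (c < N) then B_entry N p Kn (block_sign N a) lam z (block_obj N a) (block_obj N c) else 0)"
  using assms by (auto simp: K_mat_def block_obj_def block_sign_def)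

lemma sum_opposite_block:
  fixes h :: "nat \<Rightarrow> real"
  shows "(\<Sum>c<2 * N. if (a < N) \<noteq> (c < N) then h (block_obj N c) else 0) = (\<Sum>j\<in>{1..N}. h j)"
proof -
  have lower: "(\<Sum>c<N. h (block_obj N c)) = (\<Sum>j\<in>{1..N}. h j)"
    using sum.atLeast1_atMost_eq[of h N] by (simp add: block_obj_def)
  have upper: "(\<Sum>c\<in>{N..<N + N}. h (block_obj N c)) = (\<Sum>j\<in>{1..N}. h j)"
    using sum.shift_bounds_nat_ivl[of "\<lambda>c. h (block_obj N c)" 0 N N] lower
    by (simp add: lessThan_atLeast0 add.commute block_obj_def)
  let ?F = "\<lambda>c. if (a < N) \<noteq> (c < N) then h (block_obj N c) else 0"
  have halves: "{..<2 * N} = {..<N} \<union> {N..<N + N}" by auto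
  have "(\<Sum>c<2 * N. ?F c) = (\<Sum>c<N. ?F c) + (\<Sum>c\<in>{N..<N + N}. ?F c)"
    unfolding halves by (rule sum.union_disjoint) auto
  also have "(\<Sum>c<N. ?F c) = (\<Sum>c<N. if a < N then 0 else h (block_obj N c))"
    by (rule sum.cong) auto
  also have "(\<Sum>c\<in>{N..<N + N}. ?F c) = (\<Sum>c\<in>{N..<N + N}. if a < N then h (block_obj N c) else 0)"
    by (rule sum.cong) auto
  also have "(\<Sum>c<N. if a < N then 0 else h (block_obj N c)) +
      (\<Sum>c\<in>{N..<N + N}. if a < N then h (block_obj N c) else 0) = (\<Sum>j\<in>{1..N}. h j)"
    using lower upper by (cases "a < N") simp_all
  finally show ?thesis .
qed

locale groupoid_walk_metric = groupoid_walk +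
  fixes Kn :: "nat \<Rightarrow> nat \<Rightarrow> int \<Rightarrow> real"
  assumes Kn_nonneg: "\<And>i j k. i \<in> {1..N} \<Longrightarrow> j \<in> {1..N} \<Longrightarrow> i \<noteq> j \<Longrightarrow> k \<in> {-1, 1} \<Longrightarrow>
                        0 \<le> Kn i j k"
begin

context
  fixes lam z :: real
  assumes lam: "0 < lam" "lam \<le> 1" and z: "0 < z" "z \<le> 1"
begin

lemma B_entry_nonneg: "i \<in> {1..N} \<Longrightarrow> 0 \<le> B_entry N p Kn k lam z i j"
  using R_fun_nonneg lam by (simp add: B_entry_def)

lemma B_entry_le_R_fun:
  assumes "i \<in> {1..N}" "j \<in> {1..N}" "i \<noteq> j" "k \<in> {-1, 1}"
  shows "B_entry N p Kn k lam z i j \<le> R_fun N p i j k lam"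
proof -
  have "z powr Kn i j k \<le> 1" using Kn_nonneg[OF assms] z by (intro powr_le1) auto
  then show ?thesis
    using R_fun_nonneg assms(1) lam assms(3) by (simp add: B_entry_def mult_left_le_one_le)
qed

lemma B_entry_pos:
  "i \<in> {1..N} \<Longrightarrow> j \<in> {1..N} \<Longrightarrow> i \<noteq> j \<Longrightarrow> k \<in> {-1, 1} \<Longrightarrow> 0 < B_entry N p Kn k lam z i j"
  using R_fun_pos lam z by (simp add: B_entry_def)

lemma K_mat_nonneg: "a < 2 * N \<Longrightarrow> c < 2 * N \<Longrightarrow> 0 \<le> K_mat N p Kn lam z $$ (a, c)"
  using B_entry_nonneg block_obj_range by (simp add: K_mat_index)

lemma K_mat_pos:
  "a < 2 * N \<Longrightarrow> c < 2 * N \<Longrightarrow> (a < N) \<noteq> (c < N) \<Longrightarrow> block_obj N a \<noteq> block_obj N c \<Longrightarrow>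
    0 < K_mat N p Kn lam z $$ (a, c)"
  using B_entry_pos block_obj_range block_sign_range by (simp add: K_mat_index)

lemma K_mat_le_R_fun:
  assumes "a < 2 * N" "c < 2 * N"
  shows "K_mat N p Kn lam z $$ (a, c) \<le>
    (if (a < N) \<noteq> (c < N) \<and> block_obj N c \<noteq> block_obj N a
     then R_fun N p (block_obj N a) (block_obj N c) (block_sign N a) lam else 0)"
  using assms B_entry_le_R_fun[OF block_obj_range block_obj_range _ block_sign_range]
  by (auto simp: K_mat_index B_entry_def)

lemma pow_row_sum_K_mat_le:
  assumes "a < 2 * N"
  shows "pow_row_sum (K_mat N p Kn lam z) n a \<le> R_word_sum N p lam n (block_obj N a) (block_sign N a)"
  using assms
proof (induction n arbitrary: a)
  case 0
  then show ?case by simp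
next
  case (Suc n)
  let ?K = "K_mat N p Kn lam z"
  define g where "g j = (if j = block_obj N a then 0
    else R_fun N p (block_obj N a) j (block_sign N a) lam * R_word_sum N p lam n j (- block_sign N a))" for j
  have "?K $$ (a, c) * pow_row_sum ?K n c \<le> (if (a < N) \<noteq> (c < N) then g (block_obj N c) else 0)"
    if c: "c < 2 * N" for c
  proof -
    have "0 \<le> pow_row_sum ?K n c" "0 \<le> ?K $$ (a, c)"
      using pow_row_sum_nonneg[OF K_mat_carrier] K_mat_nonneg Suc.prems c by auto
    moreover have "(a < N) \<noteq> (c < N) \<Longrightarrow> block_sign N c = - block_sign N a"
      by (auto simp: block_sign_def)
    moreover have "0 \<le> R_word_sum N p lam n (block_obj N c) (block_sign N c)"
      using \<open>0 \<le> pow_row_sum ?K n c\<close> Suc.IH[OF c] by linarith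
    ultimately show ?thesis
      using K_mat_le_R_fun[OF Suc.prems c] Suc.IH[OF c] R_fun_nonneg[OF block_obj_range[OF Suc.prems]] lam
      by (auto simp: g_def intro: mult_mono)
  qed
  then have "pow_row_sum ?K (Suc n) a \<le> (\<Sum>c<2 * N. if (a < N) \<noteq> (c < N) then g (block_obj N c) else 0)"
    by (auto intro: sum_mono)
  also have "\<dots> = (\<Sum>j\<in>{1..N}. g j)" by (rule sum_opposite_block)
  also have "\<dots> = R_word_sum N p lam (Suc n) (block_obj N a) (block_sign N a)"
    using block_obj_range[OF Suc.prems] by (simp add: g_def sum.remove[of _ "block_obj N a"])
  finally show ?case .
qed

lemma K_mat_connected:
  assumes "N \<ge> 3" "a < 2 * N" "b < 2 * N"
  shows "(\<lambda>a c. a < 2 * N \<and> c < 2 * N \<and> 0 < K_mat N p Kn lam z $$ (a, c))\<^sup>*\<^sup>* a b"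
    (is "?P\<^sup>*\<^sup>* a b")
proof -
  note avoid = exists_block_index_avoiding[OF assms(1) block_obj_range block_obj_range]
  have edge: "?P\<^sup>*\<^sup>* a c"
    if "a < 2 * N" "c < 2 * N" "(a < N) \<noteq> (c < N)" "block_obj N a \<noteq> block_obj N c" for a c
    using K_mat_pos[OF that] that(1,2) by (simp add: r_into_rtranclp)
  consider "a = b" | "(a < N) \<noteq> (b < N)" "block_obj N a \<noteq> block_obj N b"
    | "(a < N) \<noteq> (b < N)" "block_obj N a = block_obj N b" | "a \<noteq> b" "(a < N) = (b < N)"
    by blast
  then show ?thesis
  proof cases
    case 1
    then show ?thesis by simp
  next
    case 2
    then show ?thesis using edge[OF assms(2,3)] by simp
  next
    case 3
    obtain c where c: "c < 2 * N" "(c < N) = (b < N)" "block_obj N c \<noteq> block_obj N a"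
      using avoid[OF assms(2) assms(2), of "b < N"] by auto
    obtain d where d: "d < 2 * N" "(d < N) = (a < N)" "block_obj N d \<noteq> block_obj N c"
      "block_obj N d \<noteq> block_obj N a"
      using avoid[OF c(1) assms(2), of "a < N"] by auto
    have ac: "?P\<^sup>*\<^sup>* a c" by (rule edge) (use assms c 3 in auto)
    have cd: "?P\<^sup>*\<^sup>* c d" by (rule edge) (use assms c d 3 in auto)
    have db: "?P\<^sup>*\<^sup>* d b" by (rule edge) (use assms d 3 in auto)
    show ?thesis using rtranclp_trans[OF rtranclp_trans[OF ac cd] db] .
  next
    case 4
    obtain c where c: "c < 2 * N" "(c < N) = (\<not> a < N)" "block_obj N c \<noteq> block_obj N a"
      "block_obj N c \<noteq> block_obj N b"
      using avoid[OF assms(2) assms(3), of "\<not> a < N"] by auto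
    have ac: "?P\<^sup>*\<^sup>* a c" by (rule edge) (use assms c in auto)
    have cb: "?P\<^sup>*\<^sup>* c b" by (rule edge) (use assms c 4 in auto)
    show ?thesis using rtranclp_trans[OF ac cb] .
  qed
qed

lemma K_mat_nonneg_irreducible:
  assumes "N \<ge> 3"
  shows "nonneg_mat (K_mat N p Kn lam z) \<and> irreducible_mat (K_mat N p Kn lam z)"
  using K_mat_nonneg irreducible_mat_if_connected[OF K_mat_carrier K_mat_nonneg K_mat_connected[OF assms]]
  by (simp add: nonneg_mat_def)

end

lemma spectral_radius_K_mat_lt_1:
  assumes "N \<ge> 1" "0 < lam" "lam < 1" "0 < z" "z \<le> 1"
  shows "spectral_radius (map_mat complex_of_real (K_mat N p Kn lam z)) < 1"
proof (rule spectral_radius_lt_1_if_pow_row_sums_bounded[OF K_mat_carrier])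
  show "0 < 2 * N" using assms(1) by simp
  show "0 \<le> K_mat N p Kn lam z $$ (a, b)" if "a < 2 * N" "b < 2 * N" for a b
    using K_mat_nonneg assms that by simp
  show "(\<Sum>k<M. pow_row_sum (K_mat N p Kn lam z) k a) \<le> 1 / (1 - lam)" if "a < 2 * N" for a M
  proof -
    have "(\<Sum>k<M. pow_row_sum (K_mat N p Kn lam z) k a) \<le>
        (\<Sum>k<M. R_word_sum N p lam k (block_obj N a) (block_sign N a))"
      using pow_row_sum_K_mat_le assms that by (intro sum_mono) simp
    also have "\<dots> \<le> 1 / (1 - lam)"
      using sum_R_word_sum_le[OF block_obj_range[OF that] block_sign_range] assms by simp
    finally show ?thesis .
  qed
qed

end

theorem proposition5p8:
  fixes N :: nat and p Kn :: "nat \<Rightarrow> nat \<Rightarrow> int \<Rightarrow> real"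
  assumes N3: "N \<ge> 3"
    and p_pos: "\<And>i j k. i \<in> {1..N} \<Longrightarrow> j \<in> {1..N} \<Longrightarrow> i \<noteq> j \<Longrightarrow> k \<in> {-1, 1} \<Longrightarrow>
                  0 < p i j k \<and> p i j k < 1"
    and p_sum: "\<And>i. i \<in> {1..N} \<Longrightarrow> (\<Sum>j \<in> {1..N} - {i}. \<Sum>k \<in> {-1, 1}. p i j k) = 1"
    and Kn_nonneg: "\<And>i j k. i \<in> {1..N} \<Longrightarrow> j \<in> {1..N} \<Longrightarrow> i \<noteq> j \<Longrightarrow> k \<in> {-1, 1} \<Longrightarrow>
                  0 \<le> Kn i j k"
  shows "(\<forall>lam z. 0 < lam \<and> lam \<le> 1 \<and> 0 < z \<and> z \<le> 1 \<longrightarrow>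
            nonneg_mat (K_mat N p Kn lam z) \<and> irreducible_mat (K_mat N p Kn lam z))
       \<and> (\<forall>lam z. 0 < lam \<and> lam < 1 \<and> 0 < z \<and> z \<le> 1 \<longrightarrow>
            spectral_radius (map_mat complex_of_real (K_mat N p Kn lam z)) < 1)"
proof -
  interpret groupoid_walk_metric N p Kn
    by unfold_locales (use p_pos p_sum Kn_nonneg in auto)
  show ?thesis
    using K_mat_nonneg_irreducible[OF _ _ _ _ N3] spectral_radius_K_mat_lt_1 N3 by auto
qed

end
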